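(* Let $\kappa$ be an infinite cardinal. The sublattice $B=\{(A,\,A\cap C,\,C) : A,C\in\mathcal{F}(\kappa),\ A\sim C\}$ of $S$ is not the range of any Banaschewski function on $S$.
   Context: $\mathcal{F}(\kappa)$ is the Boolean lattice of subsets $X\subseteq\kappa$ that are finite or cofinite. For $A,C\in\mathcal{F}(\kappa)$, $A\sim C$ means that either both $A,C$ are finite or both $\kappa\setminus A,\kappa\setminus C$ are finite. Let $\mu(A,B,C)=(A\cap B)\cup(A\cap C)\cup(B\cap C)$; a triple is balanced if $A\cap B=A\cap C=B\cap C$. $S$ is the set of balanced triples $(A,B,C)\in\mathcal{F}(\kappa)^3$ with $C\setminus\mu(A,B,C)$ finite, ordered componentwise; it is a bounded lattice with componentwise meet, join $(A,B,C)\vee(A',B',C')=(U_1\cup m,U_2\cup m,U_3\cup m)$ where $U_1=A\cup A'$, $U_2=B\cup B'$, $U_3=C\cup C'$, $m=\mu(U_1,U_2,U_3)$, least element $(\emptyset,\emptyset,\emptyset)$ and greatest element $(\kappa,\kappa,\kappa)$. A Banaschewski function on a bounded lattice $L$ is a map $f\colon L\to L$ such that $x\le y$ implies $f(x)\ge f(y)$, and $x\wedge f(x)=0_L$, $x\vee f(x)=1_L$ for all $x\in L$. *)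

theory Defs
  imports Main
begin

text \<open>The infinite cardinal kappa is represented by an infinite type 'a (its universe).\<close>

definition FC :: "'a set set" where
  "FC = {X. finite X \<or> finite (- X)}"

definition simr :: "'a set \<Rightarrow> 'a set \<Rightarrow> bool" where
  "simr A C \<longleftrightarrow> (finite A \<and> finite C) \<or> (finite (- A) \<and> finite (- C))"

definition mu :: "'a set \<Rightarrow> 'a set \<Rightarrow> 'a set \<Rightarrow> 'a set" where
  "mu A B C = (A \<inter> B) \<union> (A \<inter> C) \<union> (B \<inter> C)"

definition balanced :: "'a set \<Rightarrow> 'a set \<Rightarrow> 'a set \<Rightarrow> bool" where
  "balanced A B C \<longleftrightarrow> A \<inter> B = A \<inter> C \<and> A \<inter> C = B \<inter> C"

type_synonym 'a triple = "'a set \<times> 'a set \<times> 'a set"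

definition S :: "'a triple set" where
  "S = {(A, B, C). A \<in> FC \<and> B \<in> FC \<and> C \<in> FC \<and> balanced A B C
                   \<and> finite (C - mu A B C)}"

definition S_le :: "'a triple \<Rightarrow> 'a triple \<Rightarrow> bool" where
  "S_le x y \<longleftrightarrow> (case x of (A, B, C) \<Rightarrow> case y of (A', B', C') \<Rightarrow>
                     A \<subseteq> A' \<and> B \<subseteq> B' \<and> C \<subseteq> C')"

definition S_meet :: "'a triple \<Rightarrow> 'a triple \<Rightarrow> 'a triple" where
  "S_meet x y = (case x of (A, B, C) \<Rightarrow> case y of (A', B', C') \<Rightarrow>
                     (A \<inter> A', B \<inter> B', C \<inter> C'))"

definition S_join :: "'a triple \<Rightarrow> 'a triple \<Rightarrow> 'a triple" where
  "S_join x y = (case x of (A, B, C) \<Rightarrow> case y of (A', B', C') \<Rightarrow>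
     (let U1 = A \<union> A'; U2 = B \<union> B'; U3 = C \<union> C'; m = mu U1 U2 U3
      in (U1 \<union> m, U2 \<union> m, U3 \<union> m)))"

definition S_bot :: "'a triple" where
  "S_bot = ({}, {}, {})"

definition S_top :: "'a triple" where
  "S_top = (UNIV, UNIV, UNIV)"

definition banaschewski_S :: "('a triple \<Rightarrow> 'a triple) \<Rightarrow> bool" where
  "banaschewski_S f \<longleftrightarrow>
     (\<forall>x\<in>S. f x \<in> S) \<and>
     (\<forall>x\<in>S. \<forall>y\<in>S. S_le x y \<longrightarrow> S_le (f y) (f x)) \<and>
     (\<forall>x\<in>S. S_meet x (f x) = S_bot \<and> S_join x (f x) = S_top)"

definition Bsub :: "'a triple set" where
  "Bsub = {(A, A \<inter> C, C) | A C. A \<in> FC \<and> C \<in> FC \<and> simr A C}"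

end

theory Submission
  imports Defs
begin

text \<open>A Banaschewski function sends every element of \<open>S\<close> to a complement of it. The
  element \<open>(\<kappa>, \<emptyset>, \<emptyset>)\<close> has no complement in \<open>B\<close>: a triple \<open>(A, A \<inter> C, C)\<close> meeting it
  trivially has \<open>A = \<emptyset>\<close>, so \<open>C\<close> is finite because \<open>A \<sim> C\<close>; but its join with
  \<open>(\<kappa>, \<emptyset>, \<emptyset>)\<close> is \<open>(\<kappa>, C, C)\<close>, which is the top element only if \<open>C = \<kappa>\<close>.\<close>

lemma UNIV_empty_empty_in_S: "(UNIV, {}, {}) \<in> S"
  unfolding S_def FC_def balanced_def mu_def by simp

lemma S_meet_UNIV_empty_empty_eq_bot:
  "S_meet (UNIV, {}, {}) (A, B, C) = S_bot \<longleftrightarrow> A = {}"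
  unfolding S_meet_def S_bot_def by simp

lemma S_join_UNIV_empty_empty:
  "S_join (UNIV, {}, {}) (A, B, C) = (UNIV, B \<union> C, C \<union> B)"
  unfolding S_join_def mu_def Let_def by auto

lemma no_complement_of_UNIV_empty_empty_in_Bsub:
  assumes "infinite (UNIV :: 'a set)"
    and "y \<in> (Bsub :: 'a triple set)"
    and "S_meet (UNIV, {}, {}) y = S_bot"
    and "S_join (UNIV, {}, {}) y = S_top"
  shows False
proof -
  obtain A C where y: "y = (A, A \<inter> C, C)" and "simr A C"
    using assms(2) unfolding Bsub_def by blast
  have "A = {}"
    using assms(3) by (simp add: y S_meet_UNIV_empty_empty_eq_bot)
  with \<open>simr A C\<close> assms(1) have "finite C"
    unfolding simr_def by auto
  moreover have "C = UNIV"
    using assms(4) \<open>A = {}\<close> by (simp add: y S_join_UNIV_empty_empty S_top_def)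
  ultimately show False
    using assms(1) by simp
qed

theorem proposition5p7:
  assumes "infinite (UNIV :: 'a set)"
  shows "\<not> (\<exists>f. banaschewski_S f \<and> f ` (S :: 'a triple set) = Bsub)"
proof
  assume "\<exists>f. banaschewski_S f \<and> f ` (S :: 'a triple set) = Bsub"
  then obtain f where "banaschewski_S f" and range: "f ` (S :: 'a triple set) = Bsub"
    by blast
  let ?x = "(UNIV, {}, {}) :: 'a triple"
  have "f ?x \<in> Bsub"
    using range UNIV_empty_empty_in_S by blast
  moreover have "S_meet ?x (f ?x) = S_bot" and "S_join ?x (f ?x) = S_top"
    using \<open>banaschewski_S f\<close> UNIV_empty_empty_in_S unfolding banaschewski_S_def by auto
  ultimately show False
    using no_complement_of_UNIV_empty_empty_in_Bsub assms by blast
qed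

end
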